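(* Let $d\ge1$, $N\ge1$, $T>0$. Let $v_\textup{d}:\mathbb{R}^d\to\mathbb{R}^d$ and $K:\mathbb{R}^d\to\mathbb{R}^d$ be Lipschitz continuous with constants $\operatorname{Lip}(v_\textup{d}),\operatorname{Lip}(K)>0$, $K$ compactly supported, and set $\xi^N:=2\max\{\operatorname{Lip}(v_\textup{d}),N\operatorname{Lip}(K)\}$. Let $\mu_\cdot,\nu_\cdot\in C([0,T];\mathcal{M}^N_1(\mathbb{R}^d))$ be two solutions of the Cauchy problem with initial data $\bar\mu,\bar\nu\in\mathcal{M}^N_1(\mathbb{R}^d)$. Then \[ W_1(\mu_t,\nu_t)\le e^{\xi^Nt(1+e^{\xi^NT})}W_1(\bar\mu,\bar\nu)\qquad\forall\,t\in(0,T]. \]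
   Context: $\mathcal{M}^N_1(\mathbb{R}^d)$ is the set of positive Borel measures on $\mathbb{R}^d$ with total mass $N$ and finite first moment. For $\mu,\nu\in\mathcal{M}^N_1(\mathbb{R}^d)$, $W_1(\mu,\nu)=\inf_{\pi\in\Pi(\mu,\nu)}\int|x-y|\,d\pi(x,y)$, where $\Pi(\mu,\nu)$ is the set of measures on $\mathbb{R}^d\times\mathbb{R}^d$ with marginals $\mu$ and $\nu$; equivalently the supremum of $\int\phi\,d(\nu-\mu)$ over 1-Lipschitz $\phi:\mathbb{R}^d\to\mathbb{R}$. The velocity is $v[\mu](x)=v_\textup{d}(x)-\int K(y-x)\,d\mu(y)$. A solution of the Cauchy problem $\partial_t\mu_t+\nabla\cdot(\mu_tv[\mu_t])=0$, $\mu_0=\bar\mu$, on $[0,T]$ is a curve $\mu_\cdot\in C([0,T];\mathcal{M}^N_1(\mathbb{R}^d))$ (weak solution) given by $\mu_t=\gamma_t\#\bar\mu$, where the flow map satisfies $\gamma_t(x)=x+\int_0^tv[\mu_s](\gamma_s(x))\,ds$. *)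

theory Defs
  imports "HOL-Analysis.Analysis"
begin

definition Lip :: "('a::metric_space \<Rightarrow> 'b::metric_space) \<Rightarrow> real" where
  "Lip f = Inf {L. L-lipschitz_on UNIV f}"

definition M1 :: "real \<Rightarrow> 'a::euclidean_space measure set" where
  "M1 N = {\<mu>. sets \<mu> = sets borel \<and> emeasure \<mu> (space \<mu>) = ennreal N
              \<and> integrable \<mu> (\<lambda>x. norm x)}"

definition couplings :: "'a::euclidean_space measure \<Rightarrow> 'a measure \<Rightarrow> ('a \<times> 'a) measure set" where
  "couplings \<mu> \<nu> = {\<pi>. sets \<pi> = sets borel \<and> distr \<pi> borel fst = \<mu> \<and> distr \<pi> borel snd = \<nu>}"

definition W1 :: "'a::euclidean_space measure \<Rightarrow> 'a measure \<Rightarrow> real" where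
  "W1 \<mu> \<nu> = enn2real (INF \<pi>\<in>couplings \<mu> \<nu>. \<integral>\<^sup>+ p. ennreal (norm (fst p - snd p)) \<partial>\<pi>)"

definition vel :: "('a::euclidean_space \<Rightarrow> 'a) \<Rightarrow> ('a \<Rightarrow> 'a) \<Rightarrow> 'a measure \<Rightarrow> 'a \<Rightarrow> 'a" where
  "vel vd K \<mu> x = vd x - integral\<^sup>L \<mu> (\<lambda>y. K (y - x))"

definition is_solution ::
  "('a::euclidean_space \<Rightarrow> 'a) \<Rightarrow> ('a \<Rightarrow> 'a) \<Rightarrow> real \<Rightarrow> real \<Rightarrow> 'a measure \<Rightarrow> (real \<Rightarrow> 'a measure) \<Rightarrow> bool"
  where
  "is_solution vd K N T \<mu>bar \<mu> \<longleftrightarrow>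
     \<mu>bar \<in> M1 N \<and>
     (\<forall>t\<in>{0..T}. \<mu> t \<in> M1 N) \<and>
     (\<forall>t\<in>{0..T}. ((\<lambda>s. W1 (\<mu> s) (\<mu> t)) \<longlongrightarrow> 0) (at t within {0..T})) \<and>
     (\<exists>\<gamma> :: real \<Rightarrow> 'a \<Rightarrow> 'a.
        (\<forall>t\<in>{0..T}. \<gamma> t \<in> borel_measurable borel \<and> \<mu> t = distr \<mu>bar borel (\<gamma> t)) \<and>
        (\<forall>t\<in>{0..T}. \<forall>x. ((\<lambda>s. vel vd K (\<mu> s) (\<gamma> s x)) has_integral (\<gamma> t x - x)) {0..t}))"

end

theory Submission
  imports Defs
begin

(*
  Fix a coupling \<pi> of the initial data and flows \<gamma>, \<eta> of the two solutions. Pushing \<pi>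
  forward by (\<gamma> t, \<eta> t) couples \<mu> t and \<nu> t, so W1 (\<mu> t) (\<nu> t) is at most the mean gap
  D t = \<integral>|\<gamma> t x - \<eta> t y| d\<pi>. The velocity v[\<mu>] x is Lipschitz in x with constant
  c = Lip vd + N Lip K, and, comparing the two measures along the coupling, Lipschitz in the
  measure with constant Lip K. Gronwall for a single pair (x, y) gives
  |\<gamma> t x - \<eta> t y| \<le> e^(c t) (|x - y| + Lip K \<integral>\<^sub>0\<^sup>t D); integrating against \<pi> yields a
  Gronwall inequality for D itself, whence D t \<le> e^(c t) e^(e^(c t) N Lip K t) \<integral>|x - y| d\<pi>.
  The exponent is at most \<xi> t (1 + e^(\<xi> T)), and the infimum over \<pi> gives the claim.
*)

lemma lipschitz_on_Lip:
  fixes f :: "'a::metric_space \<Rightarrow> 'b::metric_space"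
  assumes "\<exists>L. L-lipschitz_on UNIV f"
  shows "(Lip f)-lipschitz_on UNIV f"
proof -
  let ?S = "{L. L-lipschitz_on UNIV f}"
  have ne: "?S \<noteq> {}" using assms by blast
  have "dist (f x) (f y) \<le> Lip f * dist x y" for x y
  proof (cases "x = y")
    case False
    then have "dist (f x) (f y) / dist x y \<le> Lip f" unfolding Lip_def
      by (intro cInf_greatest[OF ne]) (auto simp: lipschitz_on_def divide_le_eq)
    with False show ?thesis by (simp add: divide_le_eq)
  qed simp
  moreover have "0 \<le> Lip f" unfolding Lip_def
    by (rule cInf_greatest[OF ne]) (auto simp: lipschitz_on_def)
  ultimately show ?thesis by (auto simp: lipschitz_on_def)
qed

lemma bounded_if_compact_support:
  fixes f :: "'a::metric_space \<Rightarrow> 'b::real_normed_vector"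
  assumes "continuous_on UNIV f" and "compact (closure {x. f x \<noteq> 0})"
  obtains B where "\<And>x. norm (f x) \<le> B"
proof -
  let ?S = "closure {x. f x \<noteq> 0}"
  have "compact (f ` ?S)"
    using assms by (intro compact_continuous_image) (auto intro: continuous_on_subset)
  then have "bounded (f ` ?S)" by (rule compact_imp_bounded)
  then obtain B where "\<forall>y\<in>f ` ?S. norm y \<le> B" by (auto simp: bounded_iff)
  then have B: "\<And>x. x \<in> ?S \<Longrightarrow> norm (f x) \<le> B" by blast
  have "norm (f x) \<le> max B 0" for x
    using B[of x] closure_subset[of "{x. f x \<noteq> 0}"] by (cases "f x = 0") auto
  then show ?thesis by (rule that)
qed

lemma gronwall_le_exp:
  fixes u :: "real \<Rightarrow> real"
  assumes "0 \<le> t" and "0 \<le> c" and u_cont: "continuous_on {0..t} u"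
    and u_le: "\<And>\<tau>. \<tau> \<in> {0..t} \<Longrightarrow> u \<tau> \<le> \<alpha> + c * integral {0..\<tau>} u"
  shows "u t \<le> \<alpha> * exp (c * t)"
proof -
  \<comment> \<open>the bound, damped by \<open>exp (- c * \<tau>)\<close>, is non-increasing\<close>
  define h where "h \<tau> = exp (- c * \<tau>) * (\<alpha> + c * integral {0..\<tau>} u)" for \<tau>
  have "h t \<le> h 0"
  proof (rule DERIV_nonpos_imp_decreasing_open[OF \<open>0 \<le> t\<close>])
    fix x assume x: "0 < x" "x < t"
    have "((\<lambda>x. integral {0..x} u) has_real_derivative u x) (at x)"
      using integral_has_real_derivative[OF u_cont, of x] x at_within_Icc_at[of 0 x t] by auto
    then have "(h has_real_derivative
        exp (- c * x) * (c * u x - c * (\<alpha> + c * integral {0..x} u))) (at x)"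
      unfolding h_def by (auto intro!: derivative_eq_intros simp: algebra_simps)
    moreover have "c * u x \<le> c * (\<alpha> + c * integral {0..x} u)"
      using u_le x \<open>0 \<le> c\<close> by (intro mult_left_mono) auto
    then have "exp (- c * x) * (c * u x - c * (\<alpha> + c * integral {0..x} u)) \<le> 0"
      by (simp add: mult_nonneg_nonpos)
    ultimately show "\<exists>y. (h has_real_derivative y) (at x) \<and> y \<le> 0" by blast
  next
    show "continuous_on {0..t} h" unfolding h_def
      by (intro continuous_intros indefinite_integral_continuous_1 integrable_continuous_real u_cont)
  qed
  then have "\<alpha> + c * integral {0..t} u \<le> \<alpha> * exp (c * t)"
    by (simp add: h_def exp_minus field_simps)
  with u_le[of t] \<open>0 \<le> t\<close> show ?thesis by auto
qed

lemma gronwall_le_exp_source: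
  fixes f b :: "real \<Rightarrow> real"
  assumes "0 \<le> t" and "0 \<le> c" and f_cont: "continuous_on {0..t} f"
    and b_int: "b integrable_on {0..t}" and b_nonneg: "\<And>s. s \<in> {0..t} \<Longrightarrow> 0 \<le> b s"
    and f_le: "\<And>\<tau>. \<tau> \<in> {0..t} \<Longrightarrow> f \<tau> \<le> f0 + integral {0..\<tau>} (\<lambda>s. c * f s + b s)"
  shows "f t \<le> exp (c * t) * (f0 + integral {0..t} b)"
proof -
  have "f \<tau> \<le> (f0 + integral {0..t} b) + c * integral {0..\<tau>} f" if \<tau>: "\<tau> \<in> {0..t}" for \<tau>
  proof -
    have "f integrable_on {0..\<tau>}"
      using \<tau> by (intro integrable_continuous_real continuous_on_subset[OF f_cont]) auto
    moreover have "b integrable_on {0..\<tau>}"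
      using \<tau> by (intro integrable_on_subinterval[OF b_int]) auto
    ultimately have "integral {0..\<tau>} (\<lambda>s. c * f s + b s) = c * integral {0..\<tau>} f + integral {0..\<tau>} b"
      by (subst integral_add) (auto intro: integrable_on_mult_right)
    moreover have "integral {0..\<tau>} b \<le> integral {0..t} b"
      using \<tau> b_int \<open>b integrable_on {0..\<tau>}\<close> by (intro integral_subset_le) (auto intro: b_nonneg)
    ultimately show ?thesis using f_le[OF \<tau>] by simp
  qed
  from gronwall_le_exp[OF \<open>0 \<le> t\<close> \<open>0 \<le> c\<close> f_cont this] show ?thesis
    by (simp add: mult.commute)
qed

lemma exp_growth_le:
  fixes c a \<xi> t T :: real
  assumes "0 \<le> c" "c \<le> \<xi>" "0 \<le> a" "a \<le> \<xi>" "0 \<le> t" "t \<le> T"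
  shows "exp (c * t) * exp (exp (c * t) * a * t) \<le> exp (\<xi> * t * (1 + exp (\<xi> * T)))"
proof -
  have "exp (c * t) \<le> exp (\<xi> * T)"
    using assms by (auto intro: mult_mono)
  then have "exp (c * t) * a * t \<le> exp (\<xi> * T) * \<xi> * t"
    using assms by (intro mult_right_mono mult_mono) auto
  moreover have "c * t \<le> \<xi> * t" using assms by (intro mult_right_mono)
  ultimately show ?thesis by (simp add: exp_add[symmetric] algebra_simps)
qed

lemma continuous_on_integral_dominated:
  fixes f :: "'a::metric_space \<Rightarrow> 'b \<Rightarrow> 'c::{banach,second_countable_topology}"
  assumes f_meas: "\<And>s. s \<in> S \<Longrightarrow> f s \<in> borel_measurable M" and w: "integrable M w"
    and f_le: "\<And>s x. s \<in> S \<Longrightarrow> norm (f s x) \<le> w x"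
    and f_cont: "\<And>x. continuous_on S (\<lambda>s. f s x)"
  shows "continuous_on S (\<lambda>s. \<integral>x. f s x \<partial>M)"
proof (rule continuous_on_sequentiallyI)
  fix u a assume u: "\<forall>n. u n \<in> S" and a: "a \<in> S" and "u \<longlonglongrightarrow> a"
  then have conv: "(\<lambda>n. f (u n) x) \<longlonglongrightarrow> f a x" for x
    using f_cont[of x] unfolding continuous_on_sequentially comp_def by blast
  show "(\<lambda>n. \<integral>x. f (u n) x \<partial>M) \<longlonglongrightarrow> (\<integral>x. f a x \<partial>M)"
  proof (rule integral_dominated_convergence[OF f_meas[OF a] _ w])
    show "f (u n) \<in> borel_measurable M" for n using u f_meas by blast
    show "AE x in M. norm (f (u n) x) \<le> w x" for n using u f_le by blast
  qed (simp add: conv)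
qed

lemma M1_D:
  assumes "\<mu> \<in> M1 N" and "0 \<le> N"
  shows "sets \<mu> = sets borel" "space \<mu> = UNIV" "emeasure \<mu> UNIV = ennreal N"
    "measure \<mu> UNIV = N" "finite_measure \<mu>" "integrable \<mu> norm"
proof -
  show sets: "sets \<mu> = sets borel" using assms by (auto simp: M1_def)
  show space: "space \<mu> = UNIV" using sets_eq_imp_space_eq[OF sets] by simp
  show emeasure: "emeasure \<mu> UNIV = ennreal N" using assms space by (auto simp: M1_def)
  then show "measure \<mu> UNIV = N" using assms by (simp add: measure_def)
  show "finite_measure \<mu>" by (rule finite_measureI) (use emeasure space in simp)
  show "integrable \<mu> norm" using assms by (auto simp: M1_def)
qed

lemma fst_borel_measurable:
  "fst \<in> borel_measurable (borel :: ('a::second_countable_topology \<times> 'b::second_countable_topology) measure)"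
  by (intro borel_measurable_continuous_onI continuous_intros)

lemma snd_borel_measurable:
  "snd \<in> borel_measurable (borel :: ('a::second_countable_topology \<times> 'b::second_countable_topology) measure)"
  by (intro borel_measurable_continuous_onI continuous_intros)

lemma couplings_D:
  assumes "\<pi> \<in> couplings \<mu> \<nu>"
  shows "sets \<pi> = sets borel" "space \<pi> = UNIV" "distr \<pi> borel fst = \<mu>" "distr \<pi> borel snd = \<nu>"
    "fst \<in> borel_measurable \<pi>" "snd \<in> borel_measurable \<pi>"
proof -
  show sets: "sets \<pi> = sets borel" using assms by (simp add: couplings_def)
  show "space \<pi> = UNIV" using sets_eq_imp_space_eq[OF sets] by simp
  show "distr \<pi> borel fst = \<mu>" "distr \<pi> borel snd = \<nu>" using assms by (auto simp: couplings_def)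
  show "fst \<in> borel_measurable \<pi>" "snd \<in> borel_measurable \<pi>"
    unfolding measurable_cong_sets[OF sets refl] by (rule fst_borel_measurable snd_borel_measurable)+
qed

lemma coupling_of_M1_D:
  fixes \<mu> \<nu> :: "'a::euclidean_space measure"
  assumes \<pi>: "\<pi> \<in> couplings \<mu> \<nu>" and "\<mu> \<in> M1 N" and "\<nu> \<in> M1 N" and "0 \<le> N"
  shows "measure \<pi> UNIV = N" "finite_measure \<pi>"
    "integrable \<pi> (\<lambda>p. norm (fst p))" "integrable \<pi> (\<lambda>p. norm (snd p))"
    "integrable \<pi> (\<lambda>p. norm (fst p - snd p))"
proof -
  note \<pi>D = couplings_D[OF \<pi>]
  have "emeasure \<pi> UNIV = emeasure (distr \<pi> borel fst) UNIV"
    using \<pi>D(2,5) by (simp add: emeasure_distr)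
  then have emeasure: "emeasure \<pi> UNIV = ennreal N"
    using \<pi>D(3) M1_D(3)[OF assms(2,4)] by simp
  then show "measure \<pi> UNIV = N" using assms by (simp add: measure_def)
  show "finite_measure \<pi>" by (rule finite_measureI) (use emeasure \<pi>D in simp)
  show fst: "integrable \<pi> (\<lambda>p. norm (fst p))"
    using M1_D(6)[OF assms(2,4)] integrable_distr_eq[OF \<pi>D(5), of norm] \<pi>D by simp
  show snd: "integrable \<pi> (\<lambda>p. norm (snd p))"
    using M1_D(6)[OF assms(3,4)] integrable_distr_eq[OF \<pi>D(6), of norm] \<pi>D by simp
  show "integrable \<pi> (\<lambda>p. norm (fst p - snd p))"
  proof (rule Bochner_Integration.integrable_bound[OF Bochner_Integration.integrable_add[OF fst snd]])
    show "(\<lambda>p. norm (fst p - snd p)) \<in> borel_measurable \<pi>" using \<pi>D by measurable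
  qed (auto intro: norm_triangle_ineq4)
qed

lemma distr_pair_in_couplings:
  fixes f g :: "'a::euclidean_space \<Rightarrow> 'a"
  assumes \<pi>: "\<pi> \<in> couplings \<mu> \<nu>" and f: "f \<in> borel_measurable borel" and g: "g \<in> borel_measurable borel"
  shows "distr \<pi> borel (\<lambda>p. (f (fst p), g (snd p))) \<in> couplings (distr \<mu> borel f) (distr \<nu> borel g)"
proof -
  note \<pi>D = couplings_D[OF \<pi>]
  have fg: "(\<lambda>p. (f (fst p), g (snd p))) \<in> borel_measurable \<pi>"
    using \<pi>D f g by measurable
  have "distr (distr \<pi> borel (\<lambda>p. (f (fst p), g (snd p)))) borel fst = distr \<pi> borel (f \<circ> fst)"
    using distr_distr[OF fst_borel_measurable fg] by (simp add: comp_def)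
  also have "\<dots> = distr \<mu> borel f"
    using distr_distr[OF f \<pi>D(5)] \<pi>D(3) by simp
  finally have "distr (distr \<pi> borel (\<lambda>p. (f (fst p), g (snd p)))) borel fst = distr \<mu> borel f" .
  moreover have "distr (distr \<pi> borel (\<lambda>p. (f (fst p), g (snd p)))) borel snd = distr \<pi> borel (g \<circ> snd)"
    using distr_distr[OF snd_borel_measurable fg] by (simp add: comp_def)
  moreover have "\<dots> = distr \<nu> borel g"
    using distr_distr[OF g \<pi>D(6)] \<pi>D(4) by simp
  ultimately show ?thesis by (simp add: couplings_def)
qed

(* Both marginals have mass N, so the product measure has mass N\<^sup>2. *)
lemma scaled_product_in_couplings:
  fixes \<mu> \<nu> :: "'a::euclidean_space measure"
  assumes \<mu>: "\<mu> \<in> M1 N" and \<nu>: "\<nu> \<in> M1 N" and "0 < N"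
  shows "scale_measure (ennreal (1 / N)) (\<mu> \<Otimes>\<^sub>M \<nu>) \<in> couplings \<mu> \<nu>"
proof -
  note \<mu>D = M1_D[OF \<mu> less_imp_le[OF \<open>0 < N\<close>]] and \<nu>D = M1_D[OF \<nu> less_imp_le[OF \<open>0 < N\<close>]]
  interpret \<nu>: finite_measure \<nu> by (rule \<nu>D(5))
  let ?P = "scale_measure (ennreal (1 / N)) (\<mu> \<Otimes>\<^sub>M \<nu>)"
  have sets: "sets ?P = sets (borel :: ('a \<times> 'a) measure)"
    using sets_pair_measure_cong[OF \<mu>D(1) \<nu>D(1)] by (simp only: sets_scale_measure borel_prod)
  have space: "space ?P = UNIV" by (simp add: space_scale_measure space_pair_measure \<mu>D(2) \<nu>D(2))
  have fst: "fst \<in> borel_measurable ?P" and snd: "snd \<in> borel_measurable ?P"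
    unfolding measurable_cong_sets[OF sets refl] by (rule fst_borel_measurable snd_borel_measurable)+
  have cancel: "ennreal (1 / N) * (x * ennreal N) = x" "ennreal (1 / N) * (ennreal N * x) = x" for x
    using \<open>0 < N\<close> by (simp_all add: ennreal_mult[symmetric] mult.commute mult.left_commute)
  have "emeasure (distr ?P borel fst) A = emeasure \<mu> A" if "A \<in> sets borel" for A
  proof -
    have "fst -` A \<inter> space ?P = A \<times> space \<nu>" using space \<nu>D(2) by auto
    then show ?thesis
      using that fst \<mu>D \<nu>D \<nu>.emeasure_pair_measure_Times[of A \<mu> "space \<nu>"]
      by (simp add: emeasure_distr cancel)
  qed
  moreover have "emeasure (distr ?P borel snd) A = emeasure \<nu> A" if "A \<in> sets borel" for A
  proof -
    have "snd -` A \<inter> space ?P = space \<mu> \<times> A" using space \<mu>D(2) by auto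
    then show ?thesis
      using that snd \<mu>D \<nu>D \<nu>.emeasure_pair_measure_Times[of "space \<mu>" \<mu> A]
      by (simp add: emeasure_distr cancel)
  qed
  ultimately show ?thesis
    using sets \<mu>D(1) \<nu>D(1) by (auto simp: couplings_def intro!: measure_eqI)
qed

lemma W1_INF_eq:
  fixes \<mu> \<nu> :: "'a::euclidean_space measure"
  assumes \<mu>: "\<mu> \<in> M1 N" and \<nu>: "\<nu> \<in> M1 N" and "0 < N"
  shows "(INF \<pi>\<in>couplings \<mu> \<nu>. \<integral>\<^sup>+ p. ennreal (norm (fst p - snd p)) \<partial>\<pi>) = ennreal (W1 \<mu> \<nu>)"
proof -
  let ?P = "scale_measure (ennreal (1 / N)) (\<mu> \<Otimes>\<^sub>M \<nu>)"
  have P: "?P \<in> couplings \<mu> \<nu>" by (rule scaled_product_in_couplings[OF assms])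
  have "(INF \<pi>\<in>couplings \<mu> \<nu>. \<integral>\<^sup>+ p. ennreal (norm (fst p - snd p)) \<partial>\<pi>)
      \<le> (\<integral>\<^sup>+ p. ennreal (norm (fst p - snd p)) \<partial>?P)" by (rule INF_lower[OF P])
  also have "\<dots> < \<infinity>"
    using coupling_of_M1_D(5)[OF P \<mu> \<nu>] \<open>0 < N\<close> by (simp add: nn_integral_eq_integral)
  finally show ?thesis unfolding W1_def by (simp add: less_top)
qed

lemma W1_le_coupling_cost:
  assumes "\<pi> \<in> couplings \<mu> \<nu>" and "0 \<le> c"
    and "(\<integral>\<^sup>+ p. ennreal (norm (fst p - snd p)) \<partial>\<pi>) \<le> ennreal c"
  shows "W1 \<mu> \<nu> \<le> c"
proof -
  have "(INF \<pi>\<in>couplings \<mu> \<nu>. \<integral>\<^sup>+ p. ennreal (norm (fst p - snd p)) \<partial>\<pi>) \<le> ennreal c"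
    using INF_lower[OF assms(1)] assms(3) by (rule order_trans)
  from enn2real_mono[OF this] show ?thesis unfolding W1_def using assms(2) by simp
qed

lemma le_mult_W1I:
  fixes \<mu> \<nu> :: "'a::euclidean_space measure"
  assumes \<mu>: "\<mu> \<in> M1 N" and \<nu>: "\<nu> \<in> M1 N" and "0 < N" and "0 < E"
    and le: "\<And>\<pi>. \<pi> \<in> couplings \<mu> \<nu> \<Longrightarrow> X \<le> E * (\<integral>p. norm (fst p - snd p) \<partial>\<pi>)"
  shows "X \<le> E * W1 \<mu> \<nu>"
proof (rule field_le_epsilon)
  fix e :: real assume "0 < e"
  have "(INF \<pi>\<in>couplings \<mu> \<nu>. \<integral>\<^sup>+ p. ennreal (norm (fst p - snd p)) \<partial>\<pi>) < ennreal (W1 \<mu> \<nu> + e / E)"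
    unfolding W1_INF_eq[OF \<mu> \<nu> \<open>0 < N\<close>] using \<open>0 < e\<close> \<open>0 < E\<close>
    by (simp add: ennreal_lessI W1_def)
  then obtain \<pi> where \<pi>: "\<pi> \<in> couplings \<mu> \<nu>"
    and "(\<integral>\<^sup>+ p. ennreal (norm (fst p - snd p)) \<partial>\<pi>) < ennreal (W1 \<mu> \<nu> + e / E)"
    by (auto simp: INF_less_iff)
  then have "(\<integral>p. norm (fst p - snd p) \<partial>\<pi>) < W1 \<mu> \<nu> + e / E"
    using coupling_of_M1_D(5)[OF \<pi> \<mu> \<nu>] \<open>0 < N\<close>
    by (simp add: nn_integral_eq_integral ennreal_less_iff)
  then have "E * (\<integral>p. norm (fst p - snd p) \<partial>\<pi>) \<le> E * W1 \<mu> \<nu> + e"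
    using \<open>0 < E\<close> by (simp add: field_simps)
  with le[OF \<pi>] show "X \<le> E * W1 \<mu> \<nu> + e" by linarith
qed

definition is_flow ::
  "('a::euclidean_space \<Rightarrow> 'a) \<Rightarrow> ('a \<Rightarrow> 'a) \<Rightarrow> real \<Rightarrow> 'a measure \<Rightarrow> (real \<Rightarrow> 'a measure)
    \<Rightarrow> (real \<Rightarrow> 'a \<Rightarrow> 'a) \<Rightarrow> bool" where
  "is_flow vd K T \<mu>bar \<mu> \<gamma> \<longleftrightarrow>
     (\<forall>t\<in>{0..T}. \<gamma> t \<in> borel_measurable borel \<and> \<mu> t = distr \<mu>bar borel (\<gamma> t)) \<and>
     (\<forall>t\<in>{0..T}. \<forall>x. ((\<lambda>s. vel vd K (\<mu> s) (\<gamma> s x)) has_integral (\<gamma> t x - x)) {0..t})"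

lemma is_solution_D:
  assumes "is_solution vd K N T \<mu>bar \<mu>"
  shows "\<mu>bar \<in> M1 N" "\<And>t. t \<in> {0..T} \<Longrightarrow> \<mu> t \<in> M1 N" "\<exists>\<gamma>. is_flow vd K T \<mu>bar \<mu> \<gamma>"
  using assms unfolding is_solution_def is_flow_def by blast+

lemma is_flow_D:
  assumes "is_flow vd K T \<mu>bar \<mu> \<gamma>" and "t \<in> {0..T}"
  shows "\<gamma> t \<in> borel_measurable borel" "\<mu> t = distr \<mu>bar borel (\<gamma> t)"
    "((\<lambda>s. vel vd K (\<mu> s) (\<gamma> s x)) has_integral (\<gamma> t x - x)) {0..t}"
    "\<gamma> t x = x + integral {0..t} (\<lambda>s. vel vd K (\<mu> s) (\<gamma> s x))"
proof -
  show "\<gamma> t \<in> borel_measurable borel" "\<mu> t = distr \<mu>bar borel (\<gamma> t)"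
    and int: "((\<lambda>s. vel vd K (\<mu> s) (\<gamma> s x)) has_integral (\<gamma> t x - x)) {0..t}"
    using assms by (auto simp: is_flow_def)
  from integral_unique[OF int] show "\<gamma> t x = x + integral {0..t} (\<lambda>s. vel vd K (\<mu> s) (\<gamma> s x))"
    by simp
qed

lemma is_flow_continuous:
  assumes "is_flow vd K T \<mu>bar \<mu> \<gamma>"
  shows "continuous_on {0..T} (\<lambda>s. \<gamma> s x)"
proof (cases "0 \<le> T")
  case True
  then have "(\<lambda>s. vel vd K (\<mu> s) (\<gamma> s x)) integrable_on {0..T}"
    using is_flow_D(3)[OF assms, of T x] by (auto intro: has_integral_integrable)
  then have "continuous_on {0..T} (\<lambda>t. x + integral {0..t} (\<lambda>s. vel vd K (\<mu> s) (\<gamma> s x)))"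
    by (intro continuous_intros indefinite_integral_continuous_1)
  then show ?thesis by (rule continuous_on_eq) (simp add: is_flow_D(4)[OF assms])
qed simp

locale interaction_kernel =
  fixes vd K :: "'a::euclidean_space \<Rightarrow> 'a" and N Lv LK \<kappa> :: real
  assumes N_pos: "0 < N"
    and vd_lipschitz: "Lv-lipschitz_on UNIV vd"
    and K_lipschitz: "LK-lipschitz_on UNIV K"
    and K_bounded: "\<And>z. norm (K z) \<le> \<kappa>"
begin

lemma Lv_nonneg: "0 \<le> Lv" and LK_nonneg: "0 \<le> LK" and \<kappa>_nonneg: "0 \<le> \<kappa>"
  using lipschitz_on_nonneg[OF vd_lipschitz] lipschitz_on_nonneg[OF K_lipschitz]
    norm_ge_zero[of "K 0"] K_bounded[of 0] by linarith+

lemma K_shift_comp_measurable: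
  assumes "f \<in> borel_measurable M"
  shows "(\<lambda>x. K (f x - a)) \<in> borel_measurable M"
proof -
  have "(\<lambda>y. K (y - a)) \<in> borel_measurable borel"
    by (intro borel_measurable_continuous_onI continuous_on_compose2[OF lipschitz_on_continuous_on[OF K_lipschitz]]
        continuous_intros) auto
  from measurable_compose[OF assms this] show ?thesis .
qed

lemma K_shift_comp_integrable:
  assumes "finite_measure M" and "f \<in> borel_measurable M"
  shows "integrable M (\<lambda>x. K (f x - a))"
  using K_bounded K_shift_comp_measurable[OF assms(2)]
  by (intro finite_measure.integrable_const_bound[OF assms(1), where B=\<kappa>]) auto

lemma K_shift_integrable:
  assumes "\<mu> \<in> M1 N"
  shows "integrable \<mu> (\<lambda>y. K (y - a))"
  using M1_D[OF assms less_imp_le[OF N_pos]]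
  by (intro K_shift_comp_integrable[where f="\<lambda>y. y"]) auto

lemma norm_vel_le:
  assumes "\<mu> \<in> M1 N"
  shows "norm (vel vd K \<mu> z) \<le> norm (vd 0) + Lv * norm z + N * \<kappa>"
proof -
  note \<mu>D = M1_D[OF assms less_imp_le[OF N_pos]]
  have "norm (integral\<^sup>L \<mu> (\<lambda>y. K (y - z))) \<le> integral\<^sup>L \<mu> (\<lambda>y. \<kappa>)"
    using K_shift_integrable[OF assms] K_bounded finite_measure.integrable_const[OF \<mu>D(5)]
    by (intro Bochner_Integration.integral_norm_bound_integral) auto
  also have "\<dots> = N * \<kappa>" using \<mu>D by simp
  finally have "norm (integral\<^sup>L \<mu> (\<lambda>y. K (y - z))) \<le> N * \<kappa>" .
  moreover have "norm (vd z) \<le> norm (vd 0) + Lv * norm z"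
    using lipschitz_on_normD[OF vd_lipschitz, of z 0] norm_triangle_ineq2[of "vd z" "vd 0"] by simp
  ultimately show ?thesis
    using norm_triangle_ineq4[of "vd z" "integral\<^sup>L \<mu> (\<lambda>y. K (y - z))"] unfolding vel_def by linarith
qed

lemma norm_integral_K_shift_diff_le:
  assumes "\<nu> \<in> M1 N"
  shows "norm ((\<integral>y. K (y - a) \<partial>\<nu>) - (\<integral>y. K (y - b) \<partial>\<nu>)) \<le> N * LK * norm (a - b)"
proof -
  note \<nu>D = M1_D[OF assms less_imp_le[OF N_pos]]
  have "norm ((\<integral>y. K (y - a) \<partial>\<nu>) - (\<integral>y. K (y - b) \<partial>\<nu>)) = norm (\<integral>y. K (y - a) - K (y - b) \<partial>\<nu>)"
    using K_shift_integrable[OF assms] by simp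
  also have "\<dots> \<le> (\<integral>y. LK * norm (a - b) \<partial>\<nu>)"
  proof (intro Bochner_Integration.integral_norm_bound_integral)
    show "norm (K (y - a) - K (y - b)) \<le> LK * norm (a - b)" for y
      using lipschitz_on_normD[OF K_lipschitz, of "y - a" "y - b"] by (simp add: norm_minus_commute)
  qed (use K_shift_integrable[OF assms] finite_measure.integrable_const[OF \<nu>D(5)] in auto)
  also have "\<dots> = N * LK * norm (a - b)" using \<nu>D by simp
  finally show ?thesis .
qed

lemma norm_integral_K_distr_diff_le:
  assumes "finite_measure \<pi>" and f: "f \<in> borel_measurable \<pi>" and g: "g \<in> borel_measurable \<pi>"
    and fg_int: "integrable \<pi> (\<lambda>p. norm (f p - g p))"
  shows "norm ((\<integral>y. K (y - a) \<partial>distr \<pi> borel f) - (\<integral>y. K (y - a) \<partial>distr \<pi> borel g))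
    \<le> LK * (\<integral>p. norm (f p - g p) \<partial>\<pi>)"
proof -
  note K_int = K_shift_comp_integrable[OF assms(1)]
  have "(\<integral>y. K (y - a) \<partial>distr \<pi> borel f) - (\<integral>y. K (y - a) \<partial>distr \<pi> borel g)
      = (\<integral>p. K (f p - a) - K (g p - a) \<partial>\<pi>)"
    using K_shift_comp_measurable[of "\<lambda>y. y" borel] f g K_int[OF f] K_int[OF g]
    by (simp add: integral_distr)
  also have "norm \<dots> \<le> (\<integral>p. norm (K (f p - a) - K (g p - a)) \<partial>\<pi>)"
    by (rule integral_norm_bound)
  also have "\<dots> \<le> (\<integral>p. LK * norm (f p - g p) \<partial>\<pi>)"
  proof (intro integral_mono)
    show "norm (K (f p - a) - K (g p - a)) \<le> LK * norm (f p - g p)" for p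
      using lipschitz_on_normD[OF K_lipschitz, of "f p - a" "g p - a"] by simp
  qed (use K_int[OF f] K_int[OF g] fg_int in auto)
  finally show ?thesis by simp
qed

lemma norm_vel_diff_le:
  assumes "finite_measure \<pi>" and "f \<in> borel_measurable \<pi>" and "g \<in> borel_measurable \<pi>"
    and "integrable \<pi> (\<lambda>p. norm (f p - g p))" and "distr \<pi> borel g \<in> M1 N"
  shows "norm (vel vd K (distr \<pi> borel f) a - vel vd K (distr \<pi> borel g) b)
    \<le> (Lv + N * LK) * norm (a - b) + LK * (\<integral>p. norm (f p - g p) \<partial>\<pi>)"
proof -
  let ?I = "\<lambda>\<mu> z. \<integral>y. K (y - z) \<partial>\<mu>"
  let ?X = "?I (distr \<pi> borel f) a - ?I (distr \<pi> borel g) a"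
  let ?Y = "?I (distr \<pi> borel g) a - ?I (distr \<pi> borel g) b"
  have split: "vel vd K (distr \<pi> borel f) a - vel vd K (distr \<pi> borel g) b = (vd a - vd b) - ?X - ?Y"
    unfolding vel_def by (simp add: algebra_simps)
  have "norm (vel vd K (distr \<pi> borel f) a - vel vd K (distr \<pi> borel g) b)
      \<le> norm (vd a - vd b) + norm ?X + norm ?Y"
    unfolding split using norm_triangle_ineq4[of "vd a - vd b - ?X" ?Y] norm_triangle_ineq4[of "vd a - vd b" ?X]
    by linarith
  moreover have "(Lv + N * LK) * norm (a - b) = Lv * norm (a - b) + N * LK * norm (a - b)"
    by (simp add: distrib_right)
  ultimately show ?thesis
    using lipschitz_on_normD[OF vd_lipschitz UNIV_I UNIV_I, of a b] norm_integral_K_distr_diff_le[OF assms(1-4), of a]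
      norm_integral_K_shift_diff_le[OF assms(5), of a b]
    by linarith
qed

lemma is_flow_norm_le:
  assumes flow: "is_flow vd K T \<mu>bar \<mu> \<gamma>" and M1: "\<And>t. t \<in> {0..T} \<Longrightarrow> \<mu> t \<in> M1 N"
    and s: "s \<in> {0..T}"
  shows "norm (\<gamma> s x) \<le> exp (Lv * T) * (norm x + (norm (vd 0) + N * \<kappa>) * T)"
proof -
  define A where "A = norm (vd 0) + N * \<kappa>"
  have "0 \<le> A" using N_pos \<kappa>_nonneg by (simp add: A_def)
  note \<gamma>_cont = is_flow_continuous[OF flow]
  have "norm (\<gamma> \<tau> x) \<le> norm x + integral {0..\<tau>} (\<lambda>r. Lv * norm (\<gamma> r x) + A)"
    if \<tau>: "\<tau> \<in> {0..s}" for \<tau>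
  proof -
    have \<tau>T: "\<tau> \<in> {0..T}" using \<tau> s by auto
    have "norm (integral {0..\<tau>} (\<lambda>r. vel vd K (\<mu> r) (\<gamma> r x))) \<le> integral {0..\<tau>} (\<lambda>r. Lv * norm (\<gamma> r x) + A)"
    proof (rule integral_norm_bound_integral)
      show "(\<lambda>r. vel vd K (\<mu> r) (\<gamma> r x)) integrable_on {0..\<tau>}"
        using is_flow_D(3)[OF flow \<tau>T] by (rule has_integral_integrable)
      show "(\<lambda>r. Lv * norm (\<gamma> r x) + A) integrable_on {0..\<tau>}"
        using \<tau>T by (intro integrable_continuous_real continuous_intros continuous_on_subset[OF \<gamma>_cont]) auto
      show "norm (vel vd K (\<mu> r) (\<gamma> r x)) \<le> Lv * norm (\<gamma> r x) + A" if "r \<in> {0..\<tau>}" for r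
        using norm_vel_le[OF M1, of r "\<gamma> r x"] that \<tau>T by (simp add: A_def)
    qed
    then show ?thesis
      using norm_triangle_ineq[of x "integral {0..\<tau>} (\<lambda>r. vel vd K (\<mu> r) (\<gamma> r x))"]
      unfolding is_flow_D(4)[OF flow \<tau>T, of x] by linarith
  qed
  then have "norm (\<gamma> s x) \<le> exp (Lv * s) * (norm x + integral {0..s} (\<lambda>r. A))"
    using s \<open>0 \<le> A\<close> by (intro gronwall_le_exp_source[OF _ Lv_nonneg]
        continuous_on_norm continuous_on_subset[OF \<gamma>_cont]) auto
  also have "\<dots> = exp (Lv * s) * (norm x + A * s)" using s by simp
  also have "\<dots> \<le> exp (Lv * T) * (norm x + A * T)"
    using s Lv_nonneg \<open>0 \<le> A\<close> by (intro mult_mono add_left_mono mult_left_mono exp_mono) auto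
  finally show ?thesis by (simp add: A_def)
qed

end

locale coupled_flows = interaction_kernel vd K N Lv LK \<kappa>
  for vd K :: "'a::euclidean_space \<Rightarrow> 'a" and N Lv LK \<kappa> :: real +
  fixes T :: real and \<mu>bar \<nu>bar :: "'a measure" and \<mu> \<nu> :: "real \<Rightarrow> 'a measure"
    and \<gamma> \<eta> :: "real \<Rightarrow> 'a \<Rightarrow> 'a" and \<pi> :: "('a \<times> 'a) measure"
  assumes \<mu>bar_M1: "\<mu>bar \<in> M1 N" and \<nu>bar_M1: "\<nu>bar \<in> M1 N"
    and \<mu>_M1: "\<And>t. t \<in> {0..T} \<Longrightarrow> \<mu> t \<in> M1 N" and \<nu>_M1: "\<And>t. t \<in> {0..T} \<Longrightarrow> \<nu> t \<in> M1 N"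
    and \<gamma>_flow: "is_flow vd K T \<mu>bar \<mu> \<gamma>" and \<eta>_flow: "is_flow vd K T \<nu>bar \<nu> \<eta>"
    and coupling: "\<pi> \<in> couplings \<mu>bar \<nu>bar"
begin

definition gap :: "real \<Rightarrow> 'a \<times> 'a \<Rightarrow> real" where
  "gap s p = norm (\<gamma> s (fst p) - \<eta> s (snd p))"

definition mean_gap :: "real \<Rightarrow> real" where
  "mean_gap s = (\<integral>p. gap s p \<partial>\<pi>)"

lemmas \<pi>_D = couplings_D[OF coupling] coupling_of_M1_D[OF coupling \<mu>bar_M1 \<nu>bar_M1 less_imp_le[OF N_pos]]

sublocale \<pi>: finite_measure \<pi>
  by (rule \<pi>_D(8))

lemma flows_measurable:
  assumes "s \<in> {0..T}"
  shows "(\<lambda>p. \<gamma> s (fst p)) \<in> borel_measurable \<pi>" "(\<lambda>p. \<eta> s (snd p)) \<in> borel_measurable \<pi>"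
  using measurable_compose[OF \<pi>_D(5) is_flow_D(1)[OF \<gamma>_flow assms]]
    measurable_compose[OF \<pi>_D(6) is_flow_D(1)[OF \<eta>_flow assms]] by auto

lemma flows_distr:
  assumes "s \<in> {0..T}"
  shows "\<mu> s = distr \<pi> borel (\<lambda>p. \<gamma> s (fst p))" "\<nu> s = distr \<pi> borel (\<lambda>p. \<eta> s (snd p))"
  using distr_distr[OF is_flow_D(1)[OF \<gamma>_flow assms] \<pi>_D(5)]
    distr_distr[OF is_flow_D(1)[OF \<eta>_flow assms] \<pi>_D(6)]
    is_flow_D(2)[OF \<gamma>_flow assms] is_flow_D(2)[OF \<eta>_flow assms] \<pi>_D(3,4)
  by (simp_all add: comp_def)

lemma gap_measurable: "s \<in> {0..T} \<Longrightarrow> gap s \<in> borel_measurable \<pi>"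
  unfolding gap_def using flows_measurable by measurable

lemma gap_continuous: "continuous_on {0..T} (\<lambda>s. gap s p)"
  unfolding gap_def
  by (intro continuous_intros is_flow_continuous[OF \<gamma>_flow] is_flow_continuous[OF \<eta>_flow])

lemma gap_dominated:
  obtains w where "integrable \<pi> w" "\<And>s p. s \<in> {0..T} \<Longrightarrow> gap s p \<le> w p"
proof
  define C where "C = exp (Lv * T)"
  define A where "A = (norm (vd 0) + N * \<kappa>) * T"
  show "integrable \<pi> (\<lambda>p. C * (norm (fst p) + A) + C * (norm (snd p) + A))"
    using \<pi>_D(9,10) finite_measure.integrable_const[OF \<pi>_D(8)]
    by (intro Bochner_Integration.integrable_add integrable_mult_right)
  fix s p assume s: "s \<in> {0..T}"
  have "gap s p \<le> norm (\<gamma> s (fst p)) + norm (\<eta> s (snd p))"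
    unfolding gap_def by (rule norm_triangle_ineq4)
  then show "gap s p \<le> C * (norm (fst p) + A) + C * (norm (snd p) + A)"
    using is_flow_norm_le[OF \<gamma>_flow \<mu>_M1 s, of "fst p"] is_flow_norm_le[OF \<eta>_flow \<nu>_M1 s, of "snd p"]
    unfolding C_def A_def by linarith
qed

lemma gap_nonneg: "0 \<le> gap s p"
  unfolding gap_def by simp

lemma abs_gap [simp]: "\<bar>gap s p\<bar> = gap s p"
  using gap_nonneg by simp

lemma mean_gap_nonneg: "0 \<le> mean_gap s"
  unfolding mean_gap_def using gap_nonneg by simp

lemma gap_integrable:
  assumes "s \<in> {0..T}"
  shows "integrable \<pi> (gap s)"
proof -
  obtain w where w: "integrable \<pi> w" and le: "\<And>s p. s \<in> {0..T} \<Longrightarrow> gap s p \<le> w p"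
    using gap_dominated by blast
  have "norm (gap s p) \<le> norm (w p)" for p
    using le[OF assms, of p] abs_ge_self[of "w p"] by simp
  then show ?thesis
    by (intro Bochner_Integration.integrable_bound[OF w gap_measurable[OF assms]] AE_I2)
qed

lemma mean_gap_continuous: "continuous_on {0..T} mean_gap"
proof -
  obtain w where w: "integrable \<pi> w" and le: "\<And>s p. s \<in> {0..T} \<Longrightarrow> gap s p \<le> w p"
    using gap_dominated by blast
  show ?thesis unfolding mean_gap_def
    by (rule continuous_on_integral_dominated[OF gap_measurable w _ gap_continuous])
      (auto intro: le)
qed

lemma W1_le_mean_gap:
  assumes s: "s \<in> {0..T}"
  shows "W1 (\<mu> s) (\<nu> s) \<le> mean_gap s"
proof (rule W1_le_coupling_cost)
  let ?f = "\<lambda>p. (\<gamma> s (fst p), \<eta> s (snd p))"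
  show "distr \<pi> borel ?f \<in> couplings (\<mu> s) (\<nu> s)"
    using distr_pair_in_couplings[OF coupling is_flow_D(1)[OF \<gamma>_flow s] is_flow_D(1)[OF \<eta>_flow s]]
    by (simp add: is_flow_D(2)[OF \<gamma>_flow s] is_flow_D(2)[OF \<eta>_flow s])
  have "?f \<in> borel_measurable \<pi>" using flows_measurable[OF s] by measurable
  then have "(\<integral>\<^sup>+ p. ennreal (norm (fst p - snd p)) \<partial>distr \<pi> borel ?f) = (\<integral>\<^sup>+ p. ennreal (gap s p) \<partial>\<pi>)"
    unfolding gap_def by (subst nn_integral_distr) (auto intro!: borel_measurable_continuous_onI continuous_intros)
  also have "\<dots> = ennreal (mean_gap s)"
    unfolding mean_gap_def using gap_integrable[OF s] by (intro nn_integral_eq_integral) (auto simp: gap_nonneg)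
  finally show "(\<integral>\<^sup>+ p. ennreal (norm (fst p - snd p)) \<partial>distr \<pi> borel ?f) \<le> ennreal (mean_gap s)"
    by simp
qed (rule mean_gap_nonneg)

lemma norm_vel_diff_le_mean_gap:
  assumes s: "s \<in> {0..T}"
  shows "norm (vel vd K (\<mu> s) a - vel vd K (\<nu> s) b) \<le> (Lv + N * LK) * norm (a - b) + LK * mean_gap s"
  using norm_vel_diff_le[OF \<pi>_D(8) flows_measurable[OF s], of a b] gap_integrable[OF s, unfolded gap_def]
    \<nu>_M1[OF s] flows_distr[OF s]
  by (simp add: mean_gap_def gap_def)

lemma gap_le_integral:
  assumes \<tau>: "\<tau> \<in> {0..T}"
  shows "gap \<tau> p \<le> norm (fst p - snd p)
    + integral {0..\<tau>} (\<lambda>s. (Lv + N * LK) * gap s p + LK * mean_gap s)"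
proof -
  obtain x y where p: "p = (x, y)" by (cases p)
  let ?dv = "\<lambda>s. vel vd K (\<mu> s) (\<gamma> s x) - vel vd K (\<nu> s) (\<eta> s y)"
  have int: "(?dv has_integral ((\<gamma> \<tau> x - x) - (\<eta> \<tau> y - y))) {0..\<tau>}"
    by (rule has_integral_diff[OF is_flow_D(3)[OF \<gamma>_flow \<tau>] is_flow_D(3)[OF \<eta>_flow \<tau>]])
  have "norm (integral {0..\<tau>} ?dv) \<le> integral {0..\<tau>} (\<lambda>s. (Lv + N * LK) * gap s p + LK * mean_gap s)"
  proof (rule Henstock_Kurzweil_Integration.integral_norm_bound_integral)
    show "?dv integrable_on {0..\<tau>}" using int by (rule has_integral_integrable)
    show "(\<lambda>s. (Lv + N * LK) * gap s p + LK * mean_gap s) integrable_on {0..\<tau>}"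
      using \<tau> by (intro integrable_continuous_real continuous_intros continuous_on_subset[OF gap_continuous]
          continuous_on_subset[OF mean_gap_continuous]) auto
    show "norm (?dv s) \<le> (Lv + N * LK) * gap s p + LK * mean_gap s" if "s \<in> {0..\<tau>}" for s
      using norm_vel_diff_le_mean_gap[of s "\<gamma> s x" "\<eta> s y"] that \<tau> by (simp add: gap_def p)
  qed
  moreover have "\<gamma> \<tau> x - \<eta> \<tau> y = (x - y) + integral {0..\<tau>} ?dv"
    unfolding integral_unique[OF int] by (simp add: algebra_simps)
  ultimately show ?thesis
    using norm_triangle_ineq[of "x - y" "integral {0..\<tau>} ?dv"] by (simp add: gap_def p)
qed

lemma gap_le_exp:
  assumes \<tau>: "\<tau> \<in> {0..T}"
  shows "gap \<tau> p \<le> exp ((Lv + N * LK) * \<tau>) * (norm (fst p - snd p) + LK * integral {0..\<tau>} mean_gap)"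
proof -
  have "gap \<tau> p \<le> exp ((Lv + N * LK) * \<tau>) * (norm (fst p - snd p) + integral {0..\<tau>} (\<lambda>s. LK * mean_gap s))"
  proof (rule gronwall_le_exp_source)
    show "0 \<le> \<tau>" using \<tau> by simp
    show "0 \<le> Lv + N * LK" using Lv_nonneg LK_nonneg N_pos by simp
    show "continuous_on {0..\<tau>} (\<lambda>s. gap s p)"
      using \<tau> by (intro continuous_on_subset[OF gap_continuous]) auto
    show "(\<lambda>s. LK * mean_gap s) integrable_on {0..\<tau>}"
      using \<tau> by (intro integrable_continuous_real continuous_intros
          continuous_on_subset[OF mean_gap_continuous]) auto
    show "0 \<le> LK * mean_gap s" for s using LK_nonneg mean_gap_nonneg by simp
    show "gap \<sigma> p \<le> norm (fst p - snd p) + integral {0..\<sigma>} (\<lambda>s. (Lv + N * LK) * gap s p + LK * mean_gap s)"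
      if "\<sigma> \<in> {0..\<tau>}" for \<sigma>
      using that \<tau> by (intro gap_le_integral) auto
  qed
  then show ?thesis by simp
qed

lemma mean_gap_le_exp:
  assumes \<tau>: "\<tau> \<in> {0..T}"
  shows "mean_gap \<tau> \<le> exp ((Lv + N * LK) * \<tau>)
    * ((\<integral>p. norm (fst p - snd p) \<partial>\<pi>) + N * LK * integral {0..\<tau>} mean_gap)"
proof -
  let ?B = "LK * integral {0..\<tau>} mean_gap"
  have "mean_gap \<tau> \<le> (\<integral>p. exp ((Lv + N * LK) * \<tau>) * (norm (fst p - snd p) + ?B) \<partial>\<pi>)"
    unfolding mean_gap_def[of \<tau>] using gap_integrable[OF \<tau>] \<pi>_D(11)
    by (intro integral_mono gap_le_exp[OF \<tau>]) auto
  also have "\<dots> = exp ((Lv + N * LK) * \<tau>) * ((\<integral>p. norm (fst p - snd p) \<partial>\<pi>) + N * ?B)"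
    using \<pi>_D(2,7,11) by simp
  finally show ?thesis by (simp add: algebra_simps)
qed

lemma mean_gap_le:
  assumes t: "t \<in> {0..T}"
  shows "mean_gap t \<le> exp ((Lv + N * LK) * t) * exp (exp ((Lv + N * LK) * t) * (N * LK) * t)
    * (\<integral>p. norm (fst p - snd p) \<partial>\<pi>)"
proof -
  let ?e = "exp ((Lv + N * LK) * t)" and ?C = "\<integral>p. norm (fst p - snd p) \<partial>\<pi>"
  have "mean_gap t \<le> (?e * ?C) * exp ((?e * N * LK) * t)"
  proof (rule gronwall_le_exp)
    show "0 \<le> t" using t by simp
    show "0 \<le> ?e * N * LK" using N_pos LK_nonneg by simp
    show "continuous_on {0..t} mean_gap"
      using t by (intro continuous_on_subset[OF mean_gap_continuous]) auto
    fix \<sigma> assume \<sigma>: "\<sigma> \<in> {0..t}"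
    then have \<sigma>T: "\<sigma> \<in> {0..T}" using t by auto
    have "0 \<le> integral {0..\<sigma>} mean_gap"
      using \<sigma>T mean_gap_nonneg
      by (intro Henstock_Kurzweil_Integration.integral_nonneg integrable_continuous_real
          continuous_on_subset[OF mean_gap_continuous]) auto
    then have "0 \<le> ?C + N * LK * integral {0..\<sigma>} mean_gap"
      using N_pos LK_nonneg by simp
    moreover have "exp ((Lv + N * LK) * \<sigma>) \<le> ?e"
      using \<sigma> Lv_nonneg LK_nonneg N_pos by (auto intro: mult_left_mono)
    ultimately have "mean_gap \<sigma> \<le> ?e * (?C + N * LK * integral {0..\<sigma>} mean_gap)"
      using mean_gap_le_exp[OF \<sigma>T] by (meson mult_right_mono order_trans)
    then show "mean_gap \<sigma> \<le> ?e * ?C + ?e * N * LK * integral {0..\<sigma>} mean_gap"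
      by (simp add: algebra_simps)
  qed
  then show ?thesis by (simp add: ac_simps)
qed

lemma W1_le_exp_initial_cost:
  assumes "t \<in> {0..T}"
  shows "W1 (\<mu> t) (\<nu> t) \<le> exp ((Lv + N * LK) * t) * exp (exp ((Lv + N * LK) * t) * (N * LK) * t)
    * (\<integral>p. norm (fst p - snd p) \<partial>\<pi>)"
  using W1_le_mean_gap[OF assms] mean_gap_le[OF assms] by (rule order_trans)

end

theorem mainTheorem5:
  fixes vd K :: "'a::euclidean_space \<Rightarrow> 'a"
    and N :: nat and T \<xi> :: real
    and \<mu>bar \<nu>bar :: "'a measure" and \<mu> \<nu> :: "real \<Rightarrow> 'a measure"
  assumes "N \<ge> 1" and "T > 0"
    and "\<exists>L. L-lipschitz_on UNIV vd" and "Lip vd > 0"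
    and "\<exists>L. L-lipschitz_on UNIV K" and "Lip K > 0"
    and "compact (closure {x. K x \<noteq> 0})"
    and "\<xi> = 2 * max (Lip vd) (real N * Lip K)"
    and "is_solution vd K (real N) T \<mu>bar \<mu>"
    and "is_solution vd K (real N) T \<nu>bar \<nu>"
  shows "\<forall>t\<in>{0<..T}. W1 (\<mu> t) (\<nu> t) \<le> exp (\<xi> * t * (1 + exp (\<xi> * T))) * W1 \<mu>bar \<nu>bar"
proof
  fix t assume t: "t \<in> {0<..T}"
  note vd_lip = lipschitz_on_Lip[OF assms(3)] and K_lip = lipschitz_on_Lip[OF assms(5)]
  obtain \<kappa> where "\<And>z. norm (K z) \<le> \<kappa>"
    using bounded_if_compact_support[OF lipschitz_on_continuous_on[OF K_lip] assms(7)] by blast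
  then interpret interaction_kernel vd K "real N" "Lip vd" "Lip K" \<kappa>
    using assms(1) vd_lip K_lip by unfold_locales auto
  note \<mu>_sol = is_solution_D[OF assms(9)] and \<nu>_sol = is_solution_D[OF assms(10)]
  obtain \<gamma> \<eta> where \<gamma>: "is_flow vd K T \<mu>bar \<mu> \<gamma>" and \<eta>: "is_flow vd K T \<nu>bar \<nu> \<eta>"
    using \<mu>_sol(3) \<nu>_sol(3) by blast
  show "W1 (\<mu> t) (\<nu> t) \<le> exp (\<xi> * t * (1 + exp (\<xi> * T))) * W1 \<mu>bar \<nu>bar"
  proof (rule le_mult_W1I[OF \<mu>_sol(1) \<nu>_sol(1) N_pos exp_gt_zero])
    fix \<pi> assume "\<pi> \<in> couplings \<mu>bar \<nu>bar"
    then interpret coupled_flows vd K "real N" "Lip vd" "Lip K" \<kappa> T \<mu>bar \<nu>bar \<mu> \<nu> \<gamma> \<eta> \<pi>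
      using \<mu>_sol \<nu>_sol \<gamma> \<eta> by unfold_locales auto
    let ?C = "\<integral>p. norm (fst p - snd p) \<partial>\<pi>"
    have "exp ((Lip vd + N * Lip K) * t) * exp (exp ((Lip vd + N * Lip K) * t) * (N * Lip K) * t)
        \<le> exp (\<xi> * t * (1 + exp (\<xi> * T)))"
      using assms(4,6,8) t by (intro exp_growth_le) auto
    from mult_right_mono[OF this, of ?C] W1_le_exp_initial_cost[of t] t
    show "W1 (\<mu> t) (\<nu> t) \<le> exp (\<xi> * t * (1 + exp (\<xi> * T))) * ?C"
      by auto
  qed
qed

end
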